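(* Consider Method 1.3 (described in the context) for finding $p^*=\Pr(y,D)$, the Euclidean projection of a given point $y\in\mathbb{R}^n$ onto $D$. Suppose the method does not terminate. Then every limit point of the sequence $\{p_k\}_{k\in K}$ equals $p^*$; and if $\|p_{k+1}-y\|\ge\|p_k-y\|$ for all $k\in K$, then $p_k\to p^*$.
   Context: Setting: $D''\subset\mathbb{R}^n$ closed convex; $f_j$, $j\in J=\{1,\dots,m\}$, convex on $\mathbb{R}^n$ with $D_j=\{x:f_j(x)\le0\}$ having nonempty interior; $D'=\{x:f_j(x)\le0\ \forall j\}$; $D=D'\cap D''\ne\emptyset$. Notation: $K=\{0,1,\dots\}$, $F=\max_jf_j$, $D'_\varepsilon=\{x:F(x)\le\varepsilon\}$, $\Pr(y,S)$ is the projection of $y$ onto the closed convex set $S$, $W^1(x,D_j)=\{a:\|a\|=1,\ \langle a,z-x\rangle\le0\ \forall z\in D_j\}$. Method 1.3: choose $v^j\in\operatorname{int}D_j$, a sequence $\varepsilon_k>0$ with $\varepsilon_k\to0$, and a constant $q\ge1$; set $k=i=0$, $M_0=\mathbb{R}^n$, $y_0=\Pr(y,D'')$. Step 1: $J_i=\{j:y_i\notin D_j\}$; if empty, stop. Step 2: if $y_i\notin D'_{\varepsilon_k}$ set $Q_i=M_i$; otherwise set $i_k=i$, $p_k=y_{i_k}$, $Q_i=\mathbb{R}^n$, $k\leftarrow k+1$. Step 3: for $j\in J_i$ choose $z_i^j\in(v^j,y_i)$ with $z_i^j\notin\operatorname{int}D_j$ and $y_i+q_i^j(z_i^j-y_i)\in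 D_j$ for some $q_i^j\in[1,q]$; for $j\notin J_i$, $z_i^j=y_i$. Step 4: find $j_i\in J_i$ with $\|y_i-z_i^{j_i}\|=\max_{j\in J_i}\|y_i-z_i^j\|$. Step 5: choose $a_i\in W^1(z_i^{j_i},D_{j_i})$ and set $M_{i+1}=Q_i\cap\{x:\langle a_i,x-z_i^{j_i}\rangle\le0\}$. Step 6: $y_{i+1}=\Pr(y,M_{i+1}\cap D'')$; $i\leftarrow i+1$; go to Step 1. *)

theory Defs
  imports "HOL-Analysis.Analysis"
begin

text \<open>Index set J = {0..<m} (the paper's {1..m} shifted). D_j = {x. f_j x \<le> 0}.\<close>

definition Dj :: "(nat \<Rightarrow> 'a \<Rightarrow> real) \<Rightarrow> nat \<Rightarrow> 'a set" where
  "Dj f j = {x. f j x \<le> 0}"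

text \<open>D'_eps = {x. F x \<le> eps} with F = max_j f_j, i.e. f_j x \<le> eps for all j in J.\<close>
definition Deps :: "nat \<Rightarrow> (nat \<Rightarrow> 'a \<Rightarrow> real) \<Rightarrow> real \<Rightarrow> 'a set" where
  "Deps m f e = {x. \<forall>j<m. f j x \<le> e}"

text \<open>A non-terminating run of Method 1.3. Iteration i has current point ys i, set M i,
  set Q i, points z i j, chosen index jj i, normal a i; kk i is the value of the counter k
  when iteration i reaches Step 2 (kk (Suc i) = Suc (kk i) exactly when Step 2 takes the
  second branch, i.e. i = i_{kk i}). Non-termination: J_i is nonempty for every i.\<close>
definition method13_run ::
  "nat \<Rightarrow> (nat \<Rightarrow> 'a::euclidean_space \<Rightarrow> real) \<Rightarrow> 'a set \<Rightarrow> 'a \<Rightarrow> (nat \<Rightarrow> 'a)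
   \<Rightarrow> (nat \<Rightarrow> real) \<Rightarrow> real
   \<Rightarrow> (nat \<Rightarrow> 'a) \<Rightarrow> (nat \<Rightarrow> 'a set) \<Rightarrow> (nat \<Rightarrow> 'a set) \<Rightarrow> (nat \<Rightarrow> nat \<Rightarrow> 'a)
   \<Rightarrow> (nat \<Rightarrow> nat) \<Rightarrow> (nat \<Rightarrow> 'a) \<Rightarrow> (nat \<Rightarrow> nat) \<Rightarrow> bool" where
  "method13_run m f D2 y v eps q ys M Q z jj a kk \<longleftrightarrow>
     (\<forall>j<m. v j \<in> interior (Dj f j)) \<and>
     (\<forall>k. eps k > 0) \<and> eps \<longlonglongrightarrow> 0 \<and> q \<ge> 1 \<and>
     kk 0 = 0 \<and> M 0 = UNIV \<and> ys 0 = closest_point D2 y \<and>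
     (\<forall>i.
        \<comment> \<open>Step 1: J_i nonempty (the method does not stop)\<close>
        (\<exists>j<m. ys i \<notin> Dj f j) \<and>
        \<comment> \<open>Step 2\<close>
        (ys i \<notin> Deps m f (eps (kk i)) \<longrightarrow> Q i = M i \<and> kk (Suc i) = kk i) \<and>
        (ys i \<in> Deps m f (eps (kk i)) \<longrightarrow> Q i = UNIV \<and> kk (Suc i) = Suc (kk i)) \<and>
        \<comment> \<open>Step 3\<close>
        (\<forall>j<m. ys i \<notin> Dj f j \<longrightarrow>
            z i j \<in> open_segment (v j) (ys i) \<and> z i j \<notin> interior (Dj f j) \<and>
            (\<exists>qq. 1 \<le> qq \<and> qq \<le> q \<and> ys i + qq *\<^sub>R (z i j - ys i) \<in> Dj f j)) \<and>
        (\<forall>j<m. ys i \<in> Dj f j \<longrightarrow> z i j = ys i) \<and>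
        \<comment> \<open>Step 4\<close>
        jj i < m \<and> ys i \<notin> Dj f (jj i) \<and>
        (\<forall>j<m. ys i \<notin> Dj f j \<longrightarrow> norm (ys i - z i j) \<le> norm (ys i - z i (jj i))) \<and>
        \<comment> \<open>Step 5\<close>
        norm (a i) = 1 \<and> (\<forall>x\<in>Dj f (jj i). inner (a i) (x - z i (jj i)) \<le> 0) \<and>
        M (Suc i) = Q i \<inter> {x. inner (a i) (x - z i (jj i)) \<le> 0} \<and>
        \<comment> \<open>Step 6\<close>
        ys (Suc i) = closest_point (M (Suc i) \<inter> D2) y)"

text \<open>i_k: the iteration at which the counter moves from k to k+1; p_k = y_{i_k}.\<close>
definition method13_p :: "(nat \<Rightarrow> 'a) \<Rightarrow> (nat \<Rightarrow> nat) \<Rightarrow> nat \<Rightarrow> 'a" where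
  "method13_p ys kk k = ys (LEAST i. kk i = k \<and> kk (Suc i) = Suc k)"

end

theory Submission
  imports Defs
begin

(* Every iterate y_i is the projection of y onto the closed convex set M_i \<inter> D'', which contains
   D, so no iterate is farther from y than p* = Pr(y, D). The ball around v^j lies behind the cut
   through z_i, which bounds |y_i - z_i| by a constant times the depth of y_i beyond the cut; as
   y_{i+1} lies behind the cut, that depth is at most |y_i - y_{i+1}|, and by Step 3 so is (up to
   a constant) the distance from y_i to every D_j. If the counter k stopped at some K, the sets
   M_i \<inter> D'' would be nested from then on, so |y_i - y|^2 would increase to a finite limit and,
   by Pythagoras, (y_i) would be a Cauchy sequence; its limit would lie in D', and y_i would
   eventually enter D'_{eps_K}, forcing k to move. Hence every p_k exists, lies in
   D'_{eps_k} \<inter> D'' and is at least as close to y as p*, so each limit point of (p_k) lies in D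
   and is a closest point, i.e. equals p*. A bounded sequence whose only limit point is p*
   converges to p*. *)

lemma convex_sublevel_set:
  assumes "convex_on S f"
  shows "convex {x \<in> S. f x \<le> c}"
proof (rule convexI, clarsimp)
  fix x x' and u u' :: real assume "x \<in> S" "x' \<in> S" "f x \<le> c" "f x' \<le> c" "0 \<le> u" "0 \<le> u'" "u + u' = 1"
  then show "u *\<^sub>R x + u' *\<^sub>R x' \<in> S \<and> f (u *\<^sub>R x + u' *\<^sub>R x') \<le> c"
    using convex_lower[OF assms] convexD[OF convex_on_imp_convex[OF assms]] by (smt (verit))
qed

lemma supporting_halfspace_segment_bound:
  fixes a v w z :: "'a::real_inner"
  assumes a: "norm a = 1" and \<delta>: "0 < \<delta>" and ball: "ball v \<delta> \<subseteq> S"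
    and supp: "\<forall>x\<in>S. inner a (x - z) \<le> 0" and z: "z \<in> open_segment v w"
  shows "0 \<le> inner a (w - z)" and "\<delta> * norm (w - z) \<le> 2 * norm (w - v) * inner a (w - z)"
proof -
  obtain t where t: "0 < t" "t < 1" and z_eq: "z = (1 - t) *\<^sub>R v + t *\<^sub>R w"
    using z unfolding in_segment by auto
  have "v + (\<delta>/2) *\<^sub>R a \<in> S"
    using ball a \<delta> by (auto simp: dist_norm)
  then have "inner a ((\<delta>/2) *\<^sub>R a - t *\<^sub>R (w - v)) \<le> 0"
    using supp z_eq by (force simp: algebra_simps)
  moreover have "inner a a = 1"
    using a by (simp add: norm_eq_1)
  ultimately have depth: "\<delta>/2 \<le> t * inner a (w - v)"
    by (simp add: inner_diff_right)
  then have pos: "0 < inner a (w - v)"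
    using \<delta> t zero_less_mult_pos[of t "inner a (w - v)"] by linarith
  then have "\<delta> \<le> 2 * inner a (w - v)"
    using depth t mult_left_le_one_le[of "inner a (w - v)" t] by linarith
  then have "(1 - t) * (\<delta> * norm (w - v)) \<le> (1 - t) * (2 * inner a (w - v) * norm (w - v))"
    using t by (intro mult_left_mono mult_right_mono) auto
  moreover have w_z: "w - z = (1 - t) *\<^sub>R (w - v)"
    using z_eq by (simp add: algebra_simps)
  then have "norm (w - z) = (1 - t) * norm (w - v)" and inner_w_z: "inner a (w - z) = (1 - t) * inner a (w - v)"
    using t by simp_all
  ultimately show "\<delta> * norm (w - z) \<le> 2 * norm (w - v) * inner a (w - z)"
    by (simp add: ac_simps)
  show "0 \<le> inner a (w - z)"
    using t pos by (simp add: inner_w_z)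
qed

lemma closest_point_subset_sq_dist:
  fixes y :: "'a::euclidean_space"
  assumes "convex S" "closed S" "T \<subseteq> S" "closed T" "T \<noteq> {}"
  shows "(norm (closest_point T y - closest_point S y))\<^sup>2
         \<le> (norm (closest_point T y - y))\<^sup>2 - (norm (closest_point S y - y))\<^sup>2"
proof -
  let ?p = "closest_point S y" and ?p' = "closest_point T y"
  have "?p' \<in> S"
    using closest_point_in_set[OF assms(4,5)] assms(3) by blast
  then have "inner (y - ?p) (?p' - ?p) \<le> 0"
    using closest_point_dot[OF assms(1,2)] by blast
  moreover have "?p' - y = (?p' - ?p) - (y - ?p)" by simp
  then have "(norm (?p' - y))\<^sup>2 = (norm (?p' - ?p))\<^sup>2 - 2 * inner (y - ?p) (?p' - ?p) + (norm (?p - y))\<^sup>2"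
    unfolding power2_norm_eq_inner by (simp add: inner_diff_left inner_diff_right inner_commute)
  ultimately show ?thesis by simp
qed

lemma convergent_closest_point_decseq:
  fixes S :: "nat \<Rightarrow> 'a::euclidean_space set"
  assumes dec: "decseq S" and closed: "\<And>n. closed (S n)" and convex: "\<And>n. convex (S n)"
    and x: "x \<in> \<Inter>(range S)"
  shows "convergent (\<lambda>n. closest_point (S n) y)"
proof -
  define p where "p n = closest_point (S n) y" for n
  define g where "g n = (norm (p n - y))\<^sup>2" for n
  have gap: "(norm (p n - p k))\<^sup>2 \<le> g n - g k" if "k \<le> n" for k n
    unfolding p_def g_def using x dec that
    by (intro closest_point_subset_sq_dist closed convex) (auto simp: decseq_def)
  have "convergent g"
  proof (rule Bseq_mono_convergent)
    have "norm (p n - y) \<le> dist y x" for n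
      using closest_point_le[OF closed, of x n y] x by (simp add: p_def dist_norm norm_minus_commute)
    then show "Bseq g"
      by (intro BseqI'[of _ "(dist y x)\<^sup>2"]) (simp add: g_def power_mono)
    show "\<forall>k n. k \<le> n \<longrightarrow> g k \<le> g n"
    proof (intro allI impI)
      fix k n :: nat assume "k \<le> n"
      then show "g k \<le> g n"
        using gap[of k n] zero_le_power2[of "norm (p n - p k)"] by linarith
    qed
  qed
  then have "Cauchy g" by (rule convergent_Cauchy)
  have "Cauchy p"
    unfolding Cauchy_altdef
  proof (intro allI impI)
    fix e :: real assume "0 < e"
    then have "0 < e\<^sup>2" by simp
    then obtain N where N: "\<forall>k\<ge>N. \<forall>n>k. dist (g k) (g n) < e\<^sup>2"
      using \<open>Cauchy g\<close> unfolding Cauchy_altdef by blast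
    have "dist (p k) (p n) < e" if "N \<le> k" "k < n" for k n
    proof -
      have "\<bar>g k - g n\<bar> < e\<^sup>2"
        using N that by (simp add: dist_real_def)
      then have "(norm (p n - p k))\<^sup>2 < e\<^sup>2"
        using gap[of k n] that by linarith
      then have "norm (p n - p k) < e"
        using \<open>0 < e\<close> by (simp add: power2_less_imp_less)
      then show ?thesis
        by (simp add: dist_norm norm_minus_commute)
    qed
    then show "\<exists>N. \<forall>k\<ge>N. \<forall>n>k. dist (p k) (p n) < e" by blast
  qed
  then show ?thesis
    by (simp add: Cauchy_convergent_iff p_def [abs_def])
qed

lemma Lim_in_closed_set_approx:
  fixes x :: "nat \<Rightarrow> 'a::real_normed_vector"
  assumes "closed S" and x: "x \<longlonglongrightarrow> L" and d: "d \<longlonglongrightarrow> 0"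
    and near: "\<And>n. \<exists>w\<in>S. dist w (x n) \<le> d n"
  shows "L \<in> S"
proof -
  have "\<exists>w. \<forall>n. w n \<in> S \<and> dist (w n) (x n) \<le> d n"
    using near by (intro choice) blast
  then obtain w where w: "\<And>n. w n \<in> S" "\<And>n. dist (w n) (x n) \<le> d n"
    by blast
  have "\<forall>n. norm (w n - x n) \<le> d n"
    using w(2) by (simp add: dist_norm)
  then have "(\<lambda>n. w n - x n) \<longlonglongrightarrow> 0"
    by (rule Lim_null_comparison[OF always_eventually d])
  with x have "w \<longlonglongrightarrow> L"
    by (rule Lim_transform)
  with \<open>closed S\<close> show ?thesis
    using closed_sequentially w(1) by blast
qed

lemma bounded_unique_limit_point_imp_LIMSEQ:
  fixes x :: "nat \<Rightarrow> 'a::heine_borel"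
  assumes bounded: "bounded (range x)"
    and unique: "\<And>r l. strict_mono r \<Longrightarrow> (x \<circ> r) \<longlonglongrightarrow> l \<Longrightarrow> l = p"
  shows "x \<longlonglongrightarrow> p"
proof (rule ccontr)
  assume "\<not> x \<longlonglongrightarrow> p"
  then obtain e where "0 < e" and not_ev: "\<not> eventually (\<lambda>n. dist (x n) p < e) sequentially"
    unfolding tendsto_iff by blast
  obtain r :: "nat \<Rightarrow> nat" where r: "strict_mono r" and far: "\<And>n. \<not> dist (x (r n)) p < e"
    using not_eventually_sequentiallyD[OF not_ev] by blast
  have "bounded (range (x \<circ> r))"
    using bounded by (rule bounded_subset) auto
  then obtain l s where s: "strict_mono s" and lim: "(x \<circ> r \<circ> s) \<longlonglongrightarrow> l"
    using bounded_imp_convergent_subsequence by blast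
  have "l = p"
    using unique[OF strict_mono_o[OF r s]] lim by (simp add: o_assoc)
  then have "eventually (\<lambda>n. dist ((x \<circ> r \<circ> s) n) p < e) sequentially"
    using tendstoD[OF lim \<open>0 < e\<close>] by simp
  then show False
    using far by (auto simp: eventually_sequentially)
qed

locale method13_nonterminating =
  fixes f :: "nat \<Rightarrow> 'a::euclidean_space \<Rightarrow> real"
    and D2 :: "'a set" and y :: 'a
    and m v eps q ys M Q z jj a kk
  assumes closed_D2: "closed D2" and convex_D2: "convex D2"
    and convex_f: "\<forall>j<m. convex_on UNIV (f j)"
    and feasible_nonempty: "Deps m f 0 \<inter> D2 \<noteq> {}"
    and run: "method13_run m f D2 y v eps q ys M Q z jj a kk"
begin

abbreviation D :: "'a set" where
  "D \<equiv> Deps m f 0 \<inter> D2"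

abbreviation p :: "nat \<Rightarrow> 'a" where
  "p \<equiv> method13_p ys kk"

lemma
  shows v_interior: "j < m \<Longrightarrow> v j \<in> interior (Dj f j)"
    and eps_pos: "0 < eps k"
    and eps_tendsto_0: "eps \<longlonglongrightarrow> 0"
    and q_ge_1: "1 \<le> q"
    and kk_0: "kk 0 = 0"
    and M_0: "M 0 = UNIV"
    and ys_0: "ys 0 = closest_point D2 y"
    and step2_outside: "ys i \<notin> Deps m f (eps (kk i)) \<Longrightarrow> Q i = M i \<and> kk (Suc i) = kk i"
    and step2_inside: "ys i \<in> Deps m f (eps (kk i)) \<Longrightarrow> Q i = UNIV \<and> kk (Suc i) = Suc (kk i)"
    and step3: "j < m \<Longrightarrow> ys i \<notin> Dj f j \<Longrightarrow> z i j \<in> open_segment (v j) (ys i) \<and>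
                  (\<exists>t. 1 \<le> t \<and> t \<le> q \<and> ys i + t *\<^sub>R (z i j - ys i) \<in> Dj f j)"
    and jj_less: "jj i < m"
    and ys_notin_Dj_jj: "ys i \<notin> Dj f (jj i)"
    and z_jj_farthest: "j < m \<Longrightarrow> ys i \<notin> Dj f j \<Longrightarrow> norm (ys i - z i j) \<le> norm (ys i - z i (jj i))"
    and a_unit: "norm (a i) = 1"
    and a_supports: "x \<in> Dj f (jj i) \<Longrightarrow> inner (a i) (x - z i (jj i)) \<le> 0"
    and M_Suc: "M (Suc i) = Q i \<inter> {x. inner (a i) (x - z i (jj i)) \<le> 0}"
    and ys_Suc: "ys (Suc i) = closest_point (M (Suc i) \<inter> D2) y"
  using run unfolding method13_run_def by blast+

lemma continuous_on_f: "j < m \<Longrightarrow> continuous_on UNIV (f j)"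
  using convex_f convex_on_continuous[OF open_UNIV] by blast

lemma isCont_f: "j < m \<Longrightarrow> isCont (f j) x"
  using continuous_on_f by (simp add: continuous_on_eq_continuous_at)

lemma closed_Dj: "j < m \<Longrightarrow> closed (Dj f j)"
  unfolding Dj_def using continuous_on_f by (intro closed_Collect_le continuous_on_const)

lemma convex_Dj: "j < m \<Longrightarrow> convex (Dj f j)"
  using convex_sublevel_set[of UNIV "f j" 0] convex_f by (simp add: Dj_def)

lemma Deps_0_eq_Inter: "Deps m f 0 = (\<Inter>j<m. Dj f j)"
  by (auto simp: Deps_def Dj_def)

lemma closed_D: "closed D"
  unfolding Deps_0_eq_Inter using closed_Dj closed_D2 by auto

lemma convex_D: "convex D"
  unfolding Deps_0_eq_Inter using convex_Dj convex_D2 by (auto intro!: convex_INT convex_Int)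

lemma M_closed_convex_superset: "D \<subseteq> M i \<and> closed (M i) \<and> convex (M i)"
proof (induction i)
  case 0
  then show ?case by (simp add: M_0)
next
  case (Suc i)
  have halfspace: "{x. inner (a i) (x - z i (jj i)) \<le> 0} = {x. inner (a i) x \<le> inner (a i) (z i (jj i))}"
    by (auto simp: inner_diff_right)
  have Q: "Q i = M i \<or> Q i = UNIV"
    using step2_outside step2_inside by blast
  have "Deps m f 0 \<subseteq> Dj f (jj i)"
    unfolding Deps_0_eq_Inter using jj_less by auto
  then have "D \<subseteq> {x. inner (a i) (x - z i (jj i)) \<le> 0}"
    using a_supports by blast
  with Q Suc.IH show ?case
    unfolding M_Suc halfspace
    by (auto intro!: closed_Int convex_Int closed_halfspace_le convex_halfspace_le)
qed

lemma
  shows closed_M_D2: "closed (M i \<inter> D2)"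
    and convex_M_D2: "convex (M i \<inter> D2)"
    and D_subset_M_D2: "D \<subseteq> M i \<inter> D2"
  using M_closed_convex_superset[of i] closed_D2 convex_D2 by (auto intro: convex_Int)

lemma ys_eq_closest_point: "ys i = closest_point (M i \<inter> D2) y"
  by (cases i) (auto simp: M_0 ys_0 ys_Suc)

lemma ys_in_M_D2: "ys i \<in> M i \<inter> D2"
  unfolding ys_eq_closest_point
  using closest_point_in_set[OF closed_M_D2] D_subset_M_D2 feasible_nonempty by blast

lemma dist_ys_le: "x \<in> D \<Longrightarrow> dist y (ys i) \<le> dist y x"
  unfolding ys_eq_closest_point using D_subset_M_D2 by (blast intro: closest_point_le[OF closed_M_D2])

lemma kk_Suc_cases: "kk (Suc i) = kk i \<or> kk (Suc i) = Suc (kk i)"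
  using step2_outside step2_inside by blast

lemma incseq_kk: "incseq kk"
proof (rule incseq_SucI)
  show "kk i \<le> kk (Suc i)" for i
    using kk_Suc_cases[of i] by linarith
qed

lemma cut_below_step: "inner (a i) (ys i - z i (jj i)) \<le> norm (ys i - ys (Suc i))"
proof -
  have "inner (a i) (ys (Suc i) - z i (jj i)) \<le> 0"
    using ys_in_M_D2[of "Suc i"] unfolding M_Suc by blast
  moreover have "inner (a i) (ys i - ys (Suc i)) \<le> norm (ys i - ys (Suc i))"
    using norm_cauchy_schwarz[of "a i" "ys i - ys (Suc i)"] a_unit by simp
  moreover have "inner (a i) (ys i - z i (jj i))
      = inner (a i) (ys i - ys (Suc i)) + inner (a i) (ys (Suc i) - z i (jj i))"
    by (simp add: inner_diff_right)
  ultimately show ?thesis by linarith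
qed

lemma cut_depth_bound:
  obtains C where "0 \<le> C" and "\<And>i. norm (ys i - z i (jj i)) \<le> C * norm (ys i - ys (Suc i))"
proof -
  have "\<exists>\<delta>. \<forall>j. j < m \<longrightarrow> 0 < \<delta> j \<and> ball (v j) (\<delta> j) \<subseteq> Dj f j"
    using v_interior mem_interior by (intro choice) blast
  then obtain \<delta> where \<delta>: "\<And>j. j < m \<Longrightarrow> 0 < \<delta> j \<and> ball (v j) (\<delta> j) \<subseteq> Dj f j"
    by blast
  obtain x0 where x0: "x0 \<in> D"
    using feasible_nonempty by blast
  define c where "c j = 2 * (dist y x0 + norm (y - v j)) / \<delta> j" for j
  have c_nonneg: "0 \<le> c j" if "j < m" for j
    using \<delta>[OF that] by (simp add: c_def)
  have "norm (ys i - z i (jj i)) \<le> c (jj i) * norm (ys i - ys (Suc i))" for i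
  proof -
    let ?J = "jj i" and ?w = "ys i" and ?z = "z i (jj i)"
    have \<delta>J: "0 < \<delta> ?J" "ball (v ?J) (\<delta> ?J) \<subseteq> Dj f ?J"
      using \<delta>[OF jj_less] by auto
    have "?z \<in> open_segment (v ?J) ?w"
      using step3[OF jj_less ys_notin_Dj_jj] by blast
    then have depth: "\<delta> ?J * norm (?w - ?z) \<le> 2 * norm (?w - v ?J) * inner (a i) (?w - ?z)"
      and "0 \<le> inner (a i) (?w - ?z)"
      using supporting_halfspace_segment_bound[OF a_unit \<delta>J] a_supports by blast+
    have "norm (?w - v ?J) \<le> dist y x0 + norm (y - v ?J)"
      using dist_ys_le[OF x0, of i] norm_triangle_ineq[of "?w - y" "y - v ?J"]
      by (simp add: dist_norm norm_minus_commute)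
    then have "\<delta> ?J * norm (?w - ?z) \<le> 2 * (dist y x0 + norm (y - v ?J)) * inner (a i) (?w - ?z)"
      using depth \<open>0 \<le> inner (a i) (?w - ?z)\<close> by (smt (verit) mult_right_mono)
    also have "\<dots> \<le> 2 * (dist y x0 + norm (y - v ?J)) * norm (?w - ys (Suc i))"
      using cut_below_step[of i] by (intro mult_left_mono) auto
    finally show ?thesis
      using \<delta>J(1) by (simp add: c_def field_simps)
  qed
  moreover have "c (jj i) \<le> (\<Sum>j<m. c j)" for i
    using jj_less c_nonneg by (intro member_le_sum) auto
  ultimately have "norm (ys i - z i (jj i)) \<le> (\<Sum>j<m. c j) * norm (ys i - ys (Suc i))" for i
    by (meson mult_right_mono norm_ge_zero order_trans)
  moreover have "0 \<le> (\<Sum>j<m. c j)"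
    using c_nonneg by (intro sum_nonneg) auto
  ultimately show ?thesis
    using that by blast
qed

lemma Dj_near_ys:
  obtains C where "\<And>i j. j < m \<Longrightarrow> \<exists>w\<in>Dj f j. dist w (ys i) \<le> C * norm (ys i - ys (Suc i))"
proof -
  obtain C where C: "0 \<le> C" "\<And>i. norm (ys i - z i (jj i)) \<le> C * norm (ys i - ys (Suc i))"
    using cut_depth_bound by blast
  have "\<exists>w\<in>Dj f j. dist w (ys i) \<le> q * C * norm (ys i - ys (Suc i))" if j: "j < m" for i j
  proof (cases "ys i \<in> Dj f j")
    case True
    then show ?thesis
      using C(1) q_ge_1 by (intro bexI[of _ "ys i"]) auto
  next
    case False
    then obtain t where t: "1 \<le> t" "t \<le> q" and w: "ys i + t *\<^sub>R (z i j - ys i) \<in> Dj f j"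
      using step3[OF j] by blast
    have "dist (ys i + t *\<^sub>R (z i j - ys i)) (ys i) = t * norm (ys i - z i j)"
      using t by (simp add: dist_norm norm_minus_commute)
    also have "\<dots> \<le> q * norm (ys i - z i (jj i))"
      using t z_jj_farthest[OF j False] by (intro mult_mono) auto
    also have "\<dots> \<le> q * (C * norm (ys i - ys (Suc i)))"
      using C(2) q_ge_1 by (intro mult_left_mono) auto
    finally show ?thesis
      using w by (auto simp: mult.assoc)
  qed
  then show ?thesis
    using that by blast
qed

lemma limit_of_ys_in_Deps_0:
  assumes "ys \<longlonglongrightarrow> L"
  shows "L \<in> Deps m f 0"
proof -
  obtain C where C: "\<And>i j. j < m \<Longrightarrow> \<exists>w\<in>Dj f j. dist w (ys i) \<le> C * norm (ys i - ys (Suc i))"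
    using Dj_near_ys by blast
  have "(\<lambda>i. C * norm (ys i - ys (Suc i))) \<longlonglongrightarrow> C * norm (L - L)"
    using assms by (intro tendsto_intros LIMSEQ_Suc)
  then have "(\<lambda>i. C * norm (ys i - ys (Suc i))) \<longlonglongrightarrow> 0"
    by simp
  then have "L \<in> Dj f j" if "j < m" for j
    using Lim_in_closed_set_approx[OF closed_Dj[OF that] assms] C[OF that] by blast
  then show ?thesis
    unfolding Deps_0_eq_Inter by blast
qed

lemma eventually_ys_in_Deps:
  assumes "ys \<longlonglongrightarrow> L" and "0 < e"
  shows "eventually (\<lambda>i. ys i \<in> Deps m f e) sequentially"
proof -
  have "eventually (\<lambda>i. f j (ys i) < e) sequentially" if j: "j < m" for j
  proof (rule order_tendstoD(2))
    show "(\<lambda>i. f j (ys i)) \<longlonglongrightarrow> f j L"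
      using isCont_f[OF j] assms(1) by (rule isCont_tendsto_compose)
    show "f j L < e"
      using limit_of_ys_in_Deps_0[OF assms(1)] j \<open>0 < e\<close> by (auto simp: Deps_def)
  qed
  then have "eventually (\<lambda>i. \<forall>j\<in>{..<m}. f j (ys i) < e) sequentially"
    by (intro eventually_ball_finite) auto
  then show ?thesis
    by eventually_elim (auto simp: Deps_def less_imp_le)
qed

context
  fixes i0 K
  assumes stalled: "\<And>i. i0 \<le> i \<Longrightarrow> kk i = K"
begin

lemma ys_outside_Deps_if_stalled: "i0 \<le> i \<Longrightarrow> ys i \<notin> Deps m f (eps K)"
  using step2_inside[of i] stalled[of i] stalled[of "Suc i"] by auto

lemma M_decreasing_if_stalled: "i0 \<le> i \<Longrightarrow> M (Suc i) \<subseteq> M i"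
  using step2_outside[of i] ys_outside_Deps_if_stalled stalled unfolding M_Suc by auto

lemma ys_convergent_if_stalled: "convergent ys"
proof -
  define S where "S n = M (n + i0) \<inter> D2" for n
  have "M (Suc (n + i0)) \<subseteq> M (n + i0)" for n
    by (rule M_decreasing_if_stalled) simp
  then have "decseq S"
    unfolding S_def by (intro decseq_SucI) auto
  moreover have "closed (S n)" and "convex (S n)" for n
    unfolding S_def by (rule closed_M_D2, rule convex_M_D2)
  moreover obtain x0 where "x0 \<in> D"
    using feasible_nonempty by blast
  then have "x0 \<in> \<Inter>(range S)"
    using D_subset_M_D2 unfolding S_def by blast
  ultimately have "convergent (\<lambda>n. closest_point (S n) y)"
    by (rule convergent_closest_point_decseq)
  then obtain L where "(\<lambda>n. ys (n + i0)) \<longlonglongrightarrow> L"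
    by (auto simp: convergent_def S_def ys_eq_closest_point)
  then have "ys \<longlonglongrightarrow> L"
    by (rule LIMSEQ_offset)
  then show ?thesis
    by (auto simp: convergent_def)
qed

end

lemma kk_unbounded: "\<exists>i. k \<le> kk i"
proof (rule ccontr)
  assume "\<not> (\<exists>i. k \<le> kk i)"
  then have "range kk \<subseteq> {..<k}"
    by (auto simp: not_le)
  then have finite: "finite (range kk)"
    by (rule finite_subset) simp
  then have "Max (range kk) \<in> range kk"
    by (intro Max_in) auto
  then obtain i0 where i0: "kk i0 = Max (range kk)"
    by (metis rangeE)
  have stalled: "kk i = kk i0" if "i0 \<le> i" for i
    using Max_ge[OF finite, of "kk i"] incseqD[OF incseq_kk that] i0 by simp
  obtain L where L: "ys \<longlonglongrightarrow> L"
    using ys_convergent_if_stalled[OF stalled] unfolding convergent_def by blast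
  have "eventually (\<lambda>i. i0 \<le> i \<and> ys i \<in> Deps m f (eps (kk i0))) sequentially"
    using eventually_ge_at_top[of i0] eventually_ys_in_Deps[OF L eps_pos] by eventually_elim simp
  then obtain i where "i0 \<le> i" and "ys i \<in> Deps m f (eps (kk i0))"
    by (auto simp: eventually_sequentially)
  then show False
    using ys_outside_Deps_if_stalled[OF stalled] by blast
qed

(* Without this, the LEAST in method13_p would range over an empty set. *)
lemma kk_increments: "\<exists>i. kk i = k \<and> kk (Suc i) = Suc k"
proof -
  define i where "i = (LEAST i. Suc k \<le> kk i)"
  have reached: "Suc k \<le> kk i"
    unfolding i_def using kk_unbounded by (rule LeastI_ex)
  then obtain i' where i': "i = Suc i'"
    using kk_0 by (cases i) auto
  then have "i' < (LEAST i. Suc k \<le> kk i)"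
    by (simp add: i_def)
  then have "\<not> Suc k \<le> kk i'"
    by (rule not_less_Least)
  then have "kk i' = k \<and> kk (Suc i') = Suc k"
    using kk_Suc_cases[of i'] reached i' by auto
  then show ?thesis ..
qed

lemma p_in_Deps_eps: "p k \<in> Deps m f (eps k) \<inter> D2"
proof -
  define i where "i = (LEAST i. kk i = k \<and> kk (Suc i) = Suc k)"
  have i: "kk i = k \<and> kk (Suc i) = Suc k"
    unfolding i_def using kk_increments by (rule LeastI_ex)
  then have "ys i \<in> Deps m f (eps (kk i))"
    using step2_outside[of i] by auto
  then show ?thesis
    using i ys_in_M_D2[of i] by (simp add: method13_p_def i_def [symmetric])
qed

lemma dist_p_le: "x \<in> D \<Longrightarrow> dist y (p k) \<le> dist y x"
  unfolding method13_p_def by (rule dist_ys_le)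

lemma limit_point_of_p:
  assumes r: "strict_mono r" and lim: "(\<lambda>k. p (r k)) \<longlonglongrightarrow> l"
  shows "l = closest_point D y"
proof -
  have "l \<in> D2"
    using closed_sequentially[OF closed_D2 _ lim] p_in_Deps_eps by blast
  moreover have "f j l \<le> 0" if j: "j < m" for j
  proof (rule LIMSEQ_le)
    show "(\<lambda>k. f j (p (r k))) \<longlonglongrightarrow> f j l"
      using isCont_f[OF j] lim by (rule isCont_tendsto_compose)
    show "(\<lambda>k. eps (r k)) \<longlonglongrightarrow> 0"
      using LIMSEQ_subseq_LIMSEQ[OF eps_tendsto_0 r] by (simp add: o_def)
    show "\<exists>N. \<forall>k\<ge>N. f j (p (r k)) \<le> eps (r k)"
      using p_in_Deps_eps j by (auto simp: Deps_def)
  qed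
  ultimately have "l \<in> D"
    by (simp add: Deps_def)
  moreover have "dist y l \<le> dist y x" if "x \<in> D" for x
  proof (rule LIMSEQ_le_const2)
    show "(\<lambda>k. dist y (p (r k))) \<longlonglongrightarrow> dist y l"
      using lim by (intro tendsto_intros)
    show "\<exists>N. \<forall>k\<ge>N. dist y (p (r k)) \<le> dist y x"
      using dist_p_le[OF that] by blast
  qed
  ultimately show ?thesis
    using closest_point_unique[OF convex_D closed_D] by blast
qed

lemma p_tendsto_closest_point: "p \<longlonglongrightarrow> closest_point D y"
proof (rule bounded_unique_limit_point_imp_LIMSEQ)
  obtain x0 where "x0 \<in> D"
    using feasible_nonempty by blast
  then have "range p \<subseteq> cball y (dist y x0)"
    using dist_p_le by auto
  then show "bounded (range p)"
    by (rule bounded_subset[OF bounded_cball])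
  show "l = closest_point D y" if "strict_mono r" "(p \<circ> r) \<longlonglongrightarrow> l" for r l
    using limit_point_of_p that by (simp add: o_def)
qed

end

theorem theorem1p3p1:
  fixes f :: "nat \<Rightarrow> 'a::euclidean_space \<Rightarrow> real"
    and D2 :: "'a set" and y :: 'a
  assumes "closed D2" and "convex D2"
    and "\<forall>j<m. convex_on UNIV (f j)"
    and "\<forall>j<m. interior (Dj f j) \<noteq> {}"
    and "Deps m f 0 \<inter> D2 \<noteq> {}"
    and "method13_run m f D2 y v eps q ys M Q z jj a kk"
  shows "(\<forall>l r. strict_mono r \<and> ((\<lambda>k. method13_p ys kk (r k)) \<longlonglongrightarrow> l)
            \<longrightarrow> l = closest_point (Deps m f 0 \<inter> D2) y)
      \<and> ((\<forall>k. norm (method13_p ys kk (Suc k) - y) \<ge> norm (method13_p ys kk k - y))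
            \<longrightarrow> (method13_p ys kk \<longlonglongrightarrow> closest_point (Deps m f 0 \<inter> D2) y))"
proof -
  interpret method13_nonterminating f D2 y m v eps q ys M Q z jj a kk
    using assms(1-3,5,6) by unfold_locales
  show ?thesis
    using limit_point_of_p p_tendsto_closest_point by blast
qed

end
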